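(* For all $p\in(0,1)$ and $n\ge0$, $\mathbb P^{\mathrm{aon}}_p[o\rightsquigarrow\partial B_{n+1}]=\mathbb P''_p[o\leftrightsquigarrow\partial B_n]$. Consequently $\mathbb P''_p[o\leftrightsquigarrow\infty]=\mathbb P^{\mathrm{aon}}_p[o\rightsquigarrow\infty]\le \mathbb P_p[o\rightsquigarrow\infty]=\mathbb P'_p[o\leftrightsquigarrow\infty]$.
   Context: On $\mathbb Z^d$, $B_n=\{x:\|x\|_1\le n\}$, $\partial B_n=B_{n+1}\setminus B_n$. $\mathbb P^{\mathrm{aon}}_p$: independently, each vertex $u$ opens directed edges to all its $2d$ nearest neighbors with probability $p$ and to none with probability $1-p$. $\mathbb P_p$: each directed nearest-neighbor edge is open independently with probability $p$. For these directed models, $\{o\rightsquigarrow\partial B_n\}$ is the event that a path of open directed edges leads from $o$ to $\partial B_n$, and $\{o\rightsquigarrow\infty\}$ the event that infinitely many vertices are reachable from $o$ by such paths. $\mathbb P''_p$ is i.i.d. site percolation (each vertex open independently with probability $p$); under it $\{o\leftrightsquigarrow\partial B_n\}$ is the event that there is a nearest-neighbor path from $o$ to a vertex of $\partial B_n$ all of whose vertices (including $o$ and the endpoint) are open, and $\{o\leftrightsquigarrow\infty\}$ that the open cluster of $o$ is infinite. $\mathbb P'_p$ is undirected Bernoulli bond percolation with parameter $p$ and $\{o\leftrightsquigarrow\infty\}$ the event that the open cluster of $o$ is infinite. *)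

theory Defs
  imports "HOL-Probability.Probability"
begin

text \<open>Vertices of Z^d are vectors int ^ 'd, d = CARD('d) \<ge> 1.\<close>

definition norm1 :: "int ^ 'd \<Rightarrow> int" where
  "norm1 x = (\<Sum>i\<in>UNIV. \<bar>x $ i\<bar>)"

definition adj :: "int ^ 'd \<Rightarrow> int ^ 'd \<Rightarrow> bool" where
  "adj u v \<longleftrightarrow> norm1 (u - v) = 1"

definition ball1 :: "nat \<Rightarrow> (int ^ 'd) set" where
  "ball1 n = {x. norm1 x \<le> int n}"

definition bdry :: "nat \<Rightarrow> (int ^ 'd) set" where
  "bdry n = ball1 (Suc n) - ball1 n"

text \<open>Site percolation / all-or-none: one Bernoulli(p) variable per vertex.\<close>
definition vertex_ps :: "real \<Rightarrow> (int ^ 'd \<Rightarrow> bool) measure" where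
  "vertex_ps p = PiM UNIV (\<lambda>_. measure_pmf (bernoulli_pmf p))"

definition dir_bond_ps :: "real \<Rightarrow> ((int ^ 'd) \<times> (int ^ 'd) \<Rightarrow> bool) measure" where
  "dir_bond_ps p = PiM {(u, v). adj u v} (\<lambda>_. measure_pmf (bernoulli_pmf p))"

definition undir_bond_ps :: "real \<Rightarrow> ((int ^ 'd) set \<Rightarrow> bool) measure" where
  "undir_bond_ps p = PiM {{u, v} | u v. adj u v} (\<lambda>_. measure_pmf (bernoulli_pmf p))"

text \<open>All-or-none: vertex u opens all its outgoing edges iff \<omega> u.\<close>
definition aon_reach :: "(int ^ 'd \<Rightarrow> bool) \<Rightarrow> int ^ 'd \<Rightarrow> int ^ 'd \<Rightarrow> bool" where
  "aon_reach \<omega> = (\<lambda>u v. adj u v \<and> \<omega> u)\<^sup>*\<^sup>*"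

definition dir_reach :: "((int ^ 'd) \<times> (int ^ 'd) \<Rightarrow> bool) \<Rightarrow> int ^ 'd \<Rightarrow> int ^ 'd \<Rightarrow> bool" where
  "dir_reach \<omega> = (\<lambda>u v. adj u v \<and> \<omega> (u, v))\<^sup>*\<^sup>*"

definition site_conn :: "(int ^ 'd \<Rightarrow> bool) \<Rightarrow> int ^ 'd \<Rightarrow> int ^ 'd \<Rightarrow> bool" where
  "site_conn \<omega> x y \<longleftrightarrow> \<omega> x \<and> \<omega> y \<and> (\<lambda>u v. adj u v \<and> \<omega> u \<and> \<omega> v)\<^sup>*\<^sup>* x y"

definition bond_conn :: "((int ^ 'd) set \<Rightarrow> bool) \<Rightarrow> int ^ 'd \<Rightarrow> int ^ 'd \<Rightarrow> bool" where
  "bond_conn \<omega> = (\<lambda>u v. adj u v \<and> \<omega> {u, v})\<^sup>*\<^sup>*"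

end

theory Submission
  imports Defs
begin

text \<open>
  Every step of an all-or-none path leaves an open vertex, so a vertex is reached from \<open>o\<close>
  iff it is \<open>o\<close> or a neighbour of the open site cluster of \<open>o\<close>. As the
  \<open>\<ell>\<^sub>1\<close>-norm changes by one along an edge, "site cluster meets \<open>\<partial>B\<^sub>n\<close>" is equivalent to
  "all-or-none cluster meets \<open>\<partial>B\<^sub>n\<^sub>+\<^sub>1\<close>", and both clusters are infinite together.

  For the bond models, reaching \<open>\<partial>B\<^sub>n\<close> is a cylinder event depending on the finitely many
  bits inside \<open>B\<^sub>n\<^sub>+\<^sub>1\<close>. There we replace shared bits by independent ones, one block at
  a time, with all other bits frozen: the out-edges of a vertex \<open>u\<close> matter only through
  whether some open one leads on, which independent bits achieve with probability at least
  \<open>p\<close>; the two directions of an undirected edge \<open>{a, b}\<close> are never both needed, which makes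
  independent bits exactly as good as a common one. The events "reach \<open>\<partial>B\<^sub>n\<close>" decrease to
  "infinite cluster", so the comparisons pass to the limit.
\<close>

section \<open>Independent Bernoulli bits on a finite index set\<close>

definition bool_configs :: "'k set \<Rightarrow> ('k \<Rightarrow> bool) set" where
  "bool_configs K = PiE K (\<lambda>_. UNIV)"

definition config_weight :: "real \<Rightarrow> 'k set \<Rightarrow> ('k \<Rightarrow> bool) \<Rightarrow> real" where
  "config_weight p K y = (\<Prod>k\<in>K. if y k then p else 1 - p)"

definition bernoulli_prob :: "real \<Rightarrow> 'k set \<Rightarrow> (('k \<Rightarrow> bool) \<Rightarrow> bool) \<Rightarrow> real" where
  "bernoulli_prob p K Q = (\<Sum>y\<in>bool_configs K. config_weight p K y * of_bool (Q y))"

lemma finite_bool_configs [simp]: "finite K \<Longrightarrow> finite (bool_configs K)"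
  unfolding bool_configs_def by (intro finite_PiE) auto

lemma config_weight_nonneg: "0 \<le> p \<Longrightarrow> p \<le> 1 \<Longrightarrow> 0 \<le> config_weight p K y"
  unfolding config_weight_def by (intro prod_nonneg) auto

lemma sum_config_weight: "finite K \<Longrightarrow> (\<Sum>y\<in>bool_configs K. config_weight p K y) = 1"
  unfolding bool_configs_def config_weight_def
  by (subst prod_sum_PiE[symmetric]) (simp_all add: UNIV_bool)

lemma bernoulli_prob_mono:
  assumes "0 \<le> p" "p \<le> 1" "\<And>y. y \<in> bool_configs K \<Longrightarrow> Q y \<Longrightarrow> Q' y"
  shows "bernoulli_prob p K Q \<le> bernoulli_prob p K Q'"
  unfolding bernoulli_prob_def
  using assms config_weight_nonneg[OF assms(1,2)] by (intro sum_mono mult_left_mono) auto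

lemma bernoulli_prob_cong:
  "(\<And>y. y \<in> bool_configs K \<Longrightarrow> Q y = Q' y) \<Longrightarrow> bernoulli_prob p K Q = bernoulli_prob p K Q'"
  unfolding bernoulli_prob_def by (intro sum.cong) auto

lemma bernoulli_prob_const: "finite K \<Longrightarrow> bernoulli_prob p K (\<lambda>_. P) = of_bool P"
  unfolding bernoulli_prob_def by (simp add: sum_config_weight flip: sum_distrib_right)

lemma bernoulli_prob_not:
  "finite K \<Longrightarrow> bernoulli_prob p K (\<lambda>y. \<not> Q y) = 1 - bernoulli_prob p K Q"
  unfolding bernoulli_prob_def of_bool_not_iff
  by (simp add: right_diff_distrib sum_subtractf sum_config_weight)

lemma bernoulli_prob_union:
  assumes "finite A" "finite B" "A \<inter> B = {}"
  shows "bernoulli_prob p (A \<union> B) Q =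
    (\<Sum>y\<in>bool_configs A. config_weight p A y * bernoulli_prob p B (\<lambda>z. Q (merge A B (y, z))))"
proof -
  have weight: "config_weight p (A \<union> B) (merge A B (y, z)) = config_weight p A y * config_weight p B z"
    for y z
    unfolding config_weight_def using assms
    by (subst prod.union_disjoint) (auto simp: merge_def intro!: arg_cong2[where f="(*)"] prod.cong)
  have "bernoulli_prob p (A \<union> B) Q = (\<Sum>(y, z)\<in>bool_configs A \<times> bool_configs B.
      config_weight p (A \<union> B) (merge A B (y, z)) * of_bool (Q (merge A B (y, z))))"
    unfolding bernoulli_prob_def
    by (rule sum.reindex_bij_witness[of _ "merge A B" "\<lambda>y. (restrict y A, restrict y B)"])
      (use assms in \<open>auto simp: bool_configs_def merge_x_x_eq_restrict\<close>)
  also have "\<dots> = (\<Sum>y\<in>bool_configs A. config_weight p A y * bernoulli_prob p B (\<lambda>z. Q (merge A B (y, z))))"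
    unfolding bernoulli_prob_def weight
    by (simp add: sum.cartesian_product[symmetric] sum_distrib_left mult.assoc)
  finally show ?thesis .
qed

lemma bernoulli_prob_reindex:
  assumes "inj_on f K" and local: "\<And>z z'. (\<And>k. k \<in> K \<Longrightarrow> z k = z' k) \<Longrightarrow> Q z = Q z'"
  shows "bernoulli_prob p (f ` K) (\<lambda>y. Q (\<lambda>k. y (f k))) = bernoulli_prob p K Q"
proof -
  have "config_weight p (f ` K) y = config_weight p K (restrict (\<lambda>k. y (f k)) K)" for y
    unfolding config_weight_def using assms(1) by (simp add: prod.reindex)
  moreover have "Q (restrict (\<lambda>k. y (f k)) K) = Q (\<lambda>k. y (f k))" for y
    by (rule local) auto
  ultimately show ?thesis
    unfolding bernoulli_prob_def
    by (intro sum.reindex_bij_witness[of _ "\<lambda>z k'. if k' \<in> f ` K then z (the_inv_into K f k') else undefined"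
          "\<lambda>y. restrict (\<lambda>k. y (f k)) K"])
      (use assms(1) in \<open>auto simp: bool_configs_def PiE_def extensional_def fun_eq_iff
        the_inv_into_f_f f_the_inv_into_f\<close>)
qed

lemma sum_bool_configs_singleton:
  "(\<Sum>y\<in>bool_configs {k}. config_weight p {k} y * f (y k)) = p * f True + (1 - p) * f False"
proof -
  have "bool_configs {k} = (\<lambda>b. restrict (\<lambda>_. b) {k}) ` UNIV"
  proof (intro equalityI subsetI)
    fix y assume "y \<in> bool_configs {k}"
    then have "y = restrict (\<lambda>_. y k) {k}"
      by (auto simp: bool_configs_def PiE_def extensional_def fun_eq_iff)
    then show "y \<in> (\<lambda>b. restrict (\<lambda>_. b) {k}) ` UNIV"
      by blast
  qed (auto simp: bool_configs_def)
  moreover have "restrict (\<lambda>_. True) {k} \<noteq> restrict (\<lambda>_. False) {k}"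
    by (auto simp: fun_eq_iff)
  ultimately show ?thesis
    by (simp add: config_weight_def UNIV_bool)
qed

lemma bernoulli_prob_singleton:
  "bernoulli_prob p {k} (\<lambda>y. P (y k)) = p * of_bool (P True) + (1 - p) * of_bool (P False)"
  unfolding bernoulli_prob_def by (rule sum_bool_configs_singleton)

lemma bernoulli_prob_pair:
  assumes "k \<noteq> l"
  shows "bernoulli_prob p {k, l} (\<lambda>y. P (y k) (y l)) =
    p * (p * of_bool (P True True) + (1 - p) * of_bool (P True False)) +
    (1 - p) * (p * of_bool (P False True) + (1 - p) * of_bool (P False False))"
proof -
  have "bernoulli_prob p ({k} \<union> {l}) (\<lambda>y. P (y k) (y l)) =
      (\<Sum>y\<in>bool_configs {k}. config_weight p {k} y *
        bernoulli_prob p {l} (\<lambda>z. P (merge {k} {l} (y, z) k) (merge {k} {l} (y, z) l)))"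
    using assms by (intro bernoulli_prob_union) auto
  also have "\<dots> = (\<Sum>y\<in>bool_configs {k}. config_weight p {k} y *
      (p * of_bool (P (y k) True) + (1 - p) * of_bool (P (y k) False)))"
    using assms by (simp add: bernoulli_prob_singleton)
  also have "\<dots> = p * (p * of_bool (P True True) + (1 - p) * of_bool (P True False)) +
    (1 - p) * (p * of_bool (P False True) + (1 - p) * of_bool (P False False))"
    by (rule sum_bool_configs_singleton)
  finally show ?thesis
    by (simp add: insert_commute)
qed

lemma bernoulli_prob_coordinate:
  assumes "finite K" "k \<in> K"
  shows "bernoulli_prob p K (\<lambda>y. y k) = p"
proof -
  have "bernoulli_prob p ({k} \<union> (K - {k})) (\<lambda>y. y k) =
      (\<Sum>y\<in>bool_configs {k}. config_weight p {k} y *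
        bernoulli_prob p (K - {k}) (\<lambda>z. merge {k} (K - {k}) (y, z) k))"
    using assms by (intro bernoulli_prob_union) auto
  also have "\<dots> = p"
    using assms by (simp add: bernoulli_prob_const sum_bool_configs_singleton)
  finally show ?thesis
    using assms by (simp add: insert_absorb)
qed

lemma PiM_bernoulli_cylinder:
  fixes I J :: "'i set"
  assumes J: "finite J" "J \<subseteq> I" and p: "0 \<le> p" "p \<le> 1"
  defines "M \<equiv> PiM I (\<lambda>_. measure_pmf (bernoulli_pmf p))"
  shows "{\<omega>\<in>space M. Q (restrict \<omega> J)} \<in> sets M"
    and "measure M {\<omega>\<in>space M. Q (restrict \<omega> J)} = bernoulli_prob p J Q"
proof -
  interpret product_prob_space "\<lambda>_. measure_pmf (bernoulli_pmf p)" I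
    by (rule product_prob_spaceI) (rule prob_space_measure_pmf)
  interpret M: prob_space M
    unfolding M_def by (rule prob_space_PiM) (rule prob_space_measure_pmf)
  define S where "S = {y\<in>bool_configs J. Q y}"
  define C where "C y = prod_emb I (\<lambda>_. measure_pmf (bernoulli_pmf p)) J (PiE J (\<lambda>j. {y j}))" for y
  have C_iff: "\<omega> \<in> C y \<longleftrightarrow> \<omega> \<in> space M \<and> (\<forall>j\<in>J. \<omega> j = y j)" for \<omega> y
    unfolding C_def M_def prod_emb_def space_PiM by auto
  have event: "{\<omega>\<in>space M. Q (restrict \<omega> J)} = (\<Union>y\<in>S. C y)"
  proof safe
    fix \<omega> assume "\<omega> \<in> space M" "Q (restrict \<omega> J)"
    then show "\<omega> \<in> (\<Union>y\<in>S. C y)"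
      by (intro UN_I[of "restrict \<omega> J"]) (auto simp: S_def bool_configs_def C_iff)
  next
    fix \<omega> y assume "y \<in> S" "\<omega> \<in> C y"
    then have "restrict \<omega> J = y"
      by (auto simp: S_def C_iff bool_configs_def PiE_def extensional_def fun_eq_iff)
    with \<open>y \<in> S\<close> show "Q (restrict \<omega> J)"
      by (simp add: S_def)
  qed (simp add: C_iff)
  have C_sets: "C y \<in> sets M" for y
    unfolding C_def M_def using J by (intro sets_PiM_I) auto
  have "finite S"
    unfolding S_def using J by simp
  then show "{\<omega>\<in>space M. Q (restrict \<omega> J)} \<in> sets M"
    unfolding event using C_sets by blast
  have "disjoint_family_on C S"
  unfolding disjoint_family_on_def
  proof (intro ballI impI)
    fix y z assume "y \<in> S" "z \<in> S" "y \<noteq> z"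
    then obtain j where "j \<in> J" "y j \<noteq> z j"
      by (auto simp: S_def bool_configs_def PiE_def extensional_def fun_eq_iff)
    then show "C y \<inter> C z = {}"
      by (auto simp: C_iff)
  qed
  then have "measure M (\<Union>y\<in>S. C y) = (\<Sum>y\<in>S. measure M (C y))"
    using \<open>finite S\<close> C_sets by (intro M.finite_measure_finite_Union) auto
  also have "\<dots> = (\<Sum>y\<in>S. config_weight p J y)"
    unfolding C_def M_def using J p
    by (subst measure_PiM_emb) (auto simp: config_weight_def measure_pmf_single intro!: sum.cong prod.cong)
  also have "\<dots> = bernoulli_prob p J Q"
    unfolding bernoulli_prob_def S_def using J by (simp add: sum.inter_filter Collect_conj_eq)
  finally show "measure M {\<omega>\<in>space M. Q (restrict \<omega> J)} = bernoulli_prob p J Q"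
    unfolding event .
qed

section \<open>Unsharing bits\<close>

text \<open>
  In the hybrid configuration the edges \<open>e\<close> with \<open>\<phi> e \<in> D\<close> carry their own bit \<open>Inr e\<close>,
  while every other edge reads the bit \<open>Inl (\<phi> e)\<close> shared by its whole fibre.
\<close>

definition hybrid_index :: "('e \<Rightarrow> 'k) \<Rightarrow> 'e set \<Rightarrow> 'k set \<Rightarrow> ('k + 'e) set" where
  "hybrid_index \<phi> E D = Inl ` (\<phi> ` E - D) \<union> Inr ` {e\<in>E. \<phi> e \<in> D}"

definition hybrid_bit :: "('e \<Rightarrow> 'k) \<Rightarrow> 'k set \<Rightarrow> 'e \<Rightarrow> 'k + 'e" where
  "hybrid_bit \<phi> D e = (if \<phi> e \<in> D then Inr e else Inl (\<phi> e))"

context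
  fixes \<phi> :: "'e \<Rightarrow> 'k" and E :: "'e set" and Q :: "('e \<Rightarrow> bool) \<Rightarrow> bool" and p :: real
  assumes finite_E: "finite E" and p: "0 \<le> p" "p \<le> 1"
    and Q_local: "\<And>x x'. (\<And>e. e \<in> E \<Longrightarrow> x e = x' e) \<Longrightarrow> Q x = Q x'"
begin

lemma bernoulli_prob_hybrid_step:
  assumes D: "D \<subseteq> \<phi> ` E" "k \<in> \<phi> ` E" "k \<notin> D"
    and local_le: "\<And>x. bernoulli_prob p {k} (\<lambda>z. Q (\<lambda>e. if \<phi> e = k then z k else x e))
      \<le> bernoulli_prob p {e\<in>E. \<phi> e = k} (\<lambda>y. Q (\<lambda>e. if \<phi> e = k then y e else x e))"
  shows "bernoulli_prob p (hybrid_index \<phi> E D) (\<lambda>y. Q (\<lambda>e. y (hybrid_bit \<phi> D e)))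
    \<le> bernoulli_prob p (hybrid_index \<phi> E (insert k D)) (\<lambda>y. Q (\<lambda>e. y (hybrid_bit \<phi> (insert k D) e)))"
proof -
  define C where "C = Inl ` (\<phi> ` E - insert k D) \<union> Inr ` {e\<in>E. \<phi> e \<in> D}"
  define F where "F = {e\<in>E. \<phi> e = k}"
  have fin: "finite C" "finite F"
    unfolding C_def F_def using finite_E by auto
  have split: "hybrid_index \<phi> E D = C \<union> {Inl k}" "hybrid_index \<phi> E (insert k D) = C \<union> Inr ` F"
    unfolding hybrid_index_def C_def F_def using D by auto
  have disj: "C \<inter> {Inl k} = {}" "C \<inter> Inr ` F = {}"
    unfolding C_def F_def using D by auto
  have inner: "bernoulli_prob p {Inl k} (\<lambda>z. Q (\<lambda>e. merge C {Inl k} (y, z) (hybrid_bit \<phi> D e)))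
    \<le> bernoulli_prob p (Inr ` F) (\<lambda>z. Q (\<lambda>e. merge C (Inr ` F) (y, z) (hybrid_bit \<phi> (insert k D) e)))"
    for y
  proof -
    define x where "x e = y (hybrid_bit \<phi> D e)" for e
    have "bernoulli_prob p {Inl k} (\<lambda>z. Q (\<lambda>e. merge C {Inl k} (y, z) (hybrid_bit \<phi> D e)))
        = bernoulli_prob p {Inl k :: 'k + 'e} (\<lambda>z. Q (\<lambda>e. if \<phi> e = k then z (Inl k) else x e))"
      by (intro bernoulli_prob_cong Q_local) (use D(3) in \<open>auto simp: merge_def hybrid_bit_def C_def x_def\<close>)
    also have "\<dots> = bernoulli_prob p (Inl ` {k} :: ('k + 'e) set) (\<lambda>z. Q (\<lambda>e. if \<phi> e = k then z (Inl k) else x e))"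
      by simp
    also have "\<dots> = bernoulli_prob p {k} (\<lambda>z. Q (\<lambda>e. if \<phi> e = k then z k else x e))"
      by (rule bernoulli_prob_reindex[where Q="\<lambda>z. Q (\<lambda>e. if \<phi> e = k then z k else x e)"]) auto
    also have "\<dots> \<le> bernoulli_prob p F (\<lambda>z. Q (\<lambda>e. if \<phi> e = k then z e else x e))"
      unfolding F_def by (rule local_le)
    also have "\<dots> = bernoulli_prob p (Inr ` F :: ('k + 'e) set)
        (\<lambda>z. Q (\<lambda>e. if \<phi> e = k then z (Inr e) else x e))"
      by (rule bernoulli_prob_reindex[symmetric]) (auto intro!: Q_local simp: F_def)
    also have "\<dots> = bernoulli_prob p (Inr ` F)
        (\<lambda>z. Q (\<lambda>e. merge C (Inr ` F) (y, z) (hybrid_bit \<phi> (insert k D) e)))"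
      by (intro bernoulli_prob_cong Q_local) (use D(3) in \<open>auto simp: merge_def hybrid_bit_def C_def F_def x_def\<close>)
    finally show ?thesis .
  qed
  show ?thesis
    unfolding split bernoulli_prob_union[OF fin(1) finite.insertI[OF finite.emptyI] disj(1)]
      bernoulli_prob_union[OF fin(1) finite_imageI[OF fin(2)] disj(2)]
    by (intro sum_mono mult_left_mono inner config_weight_nonneg p)
qed

lemma bernoulli_prob_unshare_le:
  assumes local_le: "\<And>k x. k \<in> \<phi> ` E \<Longrightarrow>
    bernoulli_prob p {k} (\<lambda>z. Q (\<lambda>e. if \<phi> e = k then z k else x e))
      \<le> bernoulli_prob p {e\<in>E. \<phi> e = k} (\<lambda>y. Q (\<lambda>e. if \<phi> e = k then y e else x e))"
  shows "bernoulli_prob p (\<phi> ` E) (\<lambda>z. Q (\<lambda>e. z (\<phi> e))) \<le> bernoulli_prob p E Q"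
proof -
  have hybrid: "bernoulli_prob p (hybrid_index \<phi> E {}) (\<lambda>y. Q (\<lambda>e. y (hybrid_bit \<phi> {} e)))
      \<le> bernoulli_prob p (hybrid_index \<phi> E D) (\<lambda>y. Q (\<lambda>e. y (hybrid_bit \<phi> D e)))"
    if "D \<subseteq> \<phi> ` E" for D
    using finite_subset[OF that finite_imageI[OF finite_E]] that
  proof (induction D rule: finite_induct)
    case (insert k D)
    then have D: "D \<subseteq> \<phi> ` E" and k: "k \<in> \<phi> ` E"
      by auto
    show ?case
      using insert.IH[OF D] bernoulli_prob_hybrid_step[OF D k insert.hyps(2) local_le[OF k]]
      by (rule order_trans)
  qed simp
  have hybrid_index_all: "hybrid_index \<phi> E (\<phi> ` E) = Inr ` E"
    by (auto simp: hybrid_index_def)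
  have "bernoulli_prob p (\<phi> ` E) (\<lambda>z. Q (\<lambda>e. z (\<phi> e)))
      = bernoulli_prob p (Inl ` \<phi> ` E :: ('k + 'e) set) (\<lambda>y. Q (\<lambda>e. y (Inl (\<phi> e))))"
    by (rule bernoulli_prob_reindex[symmetric]) (auto intro!: Q_local)
  also have "\<dots> = bernoulli_prob p (hybrid_index \<phi> E {}) (\<lambda>y. Q (\<lambda>e. y (hybrid_bit \<phi> {} e)))"
    by (simp add: hybrid_index_def hybrid_bit_def)
  also have "\<dots> \<le> bernoulli_prob p (hybrid_index \<phi> E (\<phi> ` E)) (\<lambda>y. Q (\<lambda>e. y (hybrid_bit \<phi> (\<phi> ` E) e)))"
    by (rule hybrid) simp
  also have "\<dots> = bernoulli_prob p (Inr ` E :: ('k + 'e) set) (\<lambda>y. Q (\<lambda>e. y (Inr e)))"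
    unfolding hybrid_index_all by (intro bernoulli_prob_cong Q_local) (auto simp: hybrid_bit_def)
  also have "\<dots> = bernoulli_prob p E Q"
    by (intro bernoulli_prob_reindex Q_local) auto
  finally show ?thesis .
qed

end

lemma bernoulli_prob_unshare_eq:
  fixes \<phi> :: "'e \<Rightarrow> 'k"
  assumes E: "finite E" and p: "0 \<le> p" "p \<le> 1"
    and Q_local: "\<And>x x'. (\<And>e. e \<in> E \<Longrightarrow> x e = x' e) \<Longrightarrow> Q x = Q x'"
    and local_eq: "\<And>k x. k \<in> \<phi> ` E \<Longrightarrow>
      bernoulli_prob p {k} (\<lambda>z. Q (\<lambda>e. if \<phi> e = k then z k else x e))
        = bernoulli_prob p {e\<in>E. \<phi> e = k} (\<lambda>y. Q (\<lambda>e. if \<phi> e = k then y e else x e))"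
  shows "bernoulli_prob p (\<phi> ` E) (\<lambda>z. Q (\<lambda>e. z (\<phi> e))) = bernoulli_prob p E Q"
proof (rule antisym)
  show "bernoulli_prob p (\<phi> ` E) (\<lambda>z. Q (\<lambda>e. z (\<phi> e))) \<le> bernoulli_prob p E Q"
    by (rule bernoulli_prob_unshare_le[OF E p Q_local]) (simp_all add: local_eq)
  have "bernoulli_prob p (\<phi> ` E) (\<lambda>z. \<not> Q (\<lambda>e. z (\<phi> e))) \<le> bernoulli_prob p E (\<lambda>x. \<not> Q x)"
  proof (rule bernoulli_prob_unshare_le[OF E p])
    show "\<not> Q x \<longleftrightarrow> \<not> Q x'" if "\<And>e. e \<in> E \<Longrightarrow> x e = x' e" for x x'
      using Q_local[OF that] by simp
  qed (simp add: bernoulli_prob_not local_eq E)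
  then show "bernoulli_prob p E Q \<le> bernoulli_prob p (\<phi> ` E) (\<lambda>z. Q (\<lambda>e. z (\<phi> e)))"
    using E by (simp add: bernoulli_prob_not)
qed

section \<open>Reachability along open directed edges\<close>

definition open_edge :: "('v \<times> 'v) set \<Rightarrow> ('v \<times> 'v \<Rightarrow> bool) \<Rightarrow> 'v \<Rightarrow> 'v \<Rightarrow> bool" where
  "open_edge E x u v \<longleftrightarrow> (u, v) \<in> E \<and> x (u, v)"

definition reaches :: "('v \<times> 'v) set \<Rightarrow> 'v \<Rightarrow> 'v set \<Rightarrow> ('v \<times> 'v \<Rightarrow> bool) \<Rightarrow> bool" where
  "reaches E s T x \<longleftrightarrow> (\<exists>t\<in>T. (open_edge E x)\<^sup>*\<^sup>* s t)"

lemma reaches_local: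
  assumes "\<And>e. e \<in> E \<Longrightarrow> x e = x' e"
  shows "reaches E s T x = reaches E s T x'"
proof -
  have "open_edge E x = open_edge E x'"
    using assms by (auto simp: open_edge_def fun_eq_iff)
  then show ?thesis
    by (simp add: reaches_def)
qed

lemma rtranclp_sup_out_edges:
  "(\<lambda>a b. r a b \<or> (a = u \<and> S b))\<^sup>*\<^sup>* s t \<longleftrightarrow> r\<^sup>*\<^sup>* s t \<or> (r\<^sup>*\<^sup>* s u \<and> (\<exists>v. S v \<and> r\<^sup>*\<^sup>* v t))"
  (is "?r\<^sup>*\<^sup>* s t \<longleftrightarrow> _")
proof
  show "?r\<^sup>*\<^sup>* s t \<Longrightarrow> r\<^sup>*\<^sup>* s t \<or> (r\<^sup>*\<^sup>* s u \<and> (\<exists>v. S v \<and> r\<^sup>*\<^sup>* v t))"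
  proof (induction rule: rtranclp_induct)
    case (step y z)
    from step.hyps(2) consider "r y z" | "y = u" "S z"
      by blast
    then show ?case
    proof cases
      case 1
      with step.IH show ?thesis
        by (auto intro: rtranclp.rtrancl_into_rtrancl)
    qed (use step.IH in auto)
  qed simp
  have lift: "r\<^sup>*\<^sup>* a b \<Longrightarrow> ?r\<^sup>*\<^sup>* a b" for a b
    by (erule rtranclp_mono[THEN predicate2D, rotated]) auto
  assume "r\<^sup>*\<^sup>* s t \<or> (r\<^sup>*\<^sup>* s u \<and> (\<exists>v. S v \<and> r\<^sup>*\<^sup>* v t))"
  then show "?r\<^sup>*\<^sup>* s t"
  proof
    assume "r\<^sup>*\<^sup>* s u \<and> (\<exists>v. S v \<and> r\<^sup>*\<^sup>* v t)"
    then obtain v where "?r\<^sup>*\<^sup>* s u" "?r u v" "?r\<^sup>*\<^sup>* v t"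
      using lift by blast
    then show ?thesis
      by (rule rtranclp_trans[OF rtranclp.rtrancl_into_rtrancl])
  qed (rule lift)
qed

lemma reaches_open_out_edges:
  fixes u :: 'v and x :: "'v \<times> 'v \<Rightarrow> bool"
  defines "c \<equiv> \<lambda>e. fst e \<noteq> u \<and> x e"
  shows "reaches E s T x \<longleftrightarrow> reaches E s T c \<or>
    ((open_edge E c)\<^sup>*\<^sup>* s u \<and> (\<exists>v. (u, v) \<in> E \<and> x (u, v) \<and> reaches E v T c))"
proof -
  have "open_edge E x = (\<lambda>a b. open_edge E c a b \<or> (a = u \<and> (u, b) \<in> E \<and> x (u, b)))"
    unfolding open_edge_def c_def by auto
  then show ?thesis
    unfolding reaches_def by (auto simp: rtranclp_sup_out_edges)
qed

text \<open>
  With the out-edges of \<open>u\<close> closed, let \<open>A\<close> be reaching \<open>T\<close>, \<open>R\<close> reaching \<open>u\<close>, and \<open>G v\<close>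
  reaching \<open>T\<close> from \<open>v\<close>. Reaching \<open>T\<close> is \<open>A \<or> (R \<and> (\<exists>v. G v \<and> (u, v) open))\<close>: a common bit
  for the out-edges of \<open>u\<close> makes the last disjunct hold with probability \<open>p\<close>, independent
  bits with probability at least \<open>p\<close>.
\<close>

lemma bernoulli_prob_reaches_unshare_out_edges:
  assumes "finite E" "0 \<le> p" "p \<le> 1"
  shows "bernoulli_prob p {u} (\<lambda>z. reaches E s T (\<lambda>e. if fst e = u then z u else x e))
    \<le> bernoulli_prob p {e\<in>E. fst e = u} (\<lambda>y. reaches E s T (\<lambda>e. if fst e = u then y e else x e))"
proof -
  define c where "c e \<longleftrightarrow> fst e \<noteq> u \<and> x e" for e
  define A where "A \<longleftrightarrow> reaches E s T c"
  define R where "R \<longleftrightarrow> (open_edge E c)\<^sup>*\<^sup>* s u"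
  define G where "G v \<longleftrightarrow> (u, v) \<in> E \<and> reaches E v T c" for v
  have reach_iff: "reaches E s T (\<lambda>e. if fst e = u then y e else x e) \<longleftrightarrow> A \<or> (R \<and> (\<exists>v. G v \<and> y (u, v)))"
    for y
  proof -
    have c_eq: "(\<lambda>e. fst e \<noteq> u \<and> (if fst e = u then y e else x e)) = c"
      by (auto simp: c_def fun_eq_iff)
    show ?thesis
      using reaches_open_out_edges[where u=u and x="\<lambda>e. if fst e = u then y e else x e", unfolded c_eq]
      unfolding A_def R_def G_def by auto
  qed
  have fin: "finite {e\<in>E. fst e = u}"
    using assms(1) by simp
  show ?thesis
    unfolding reach_iff
  proof (cases "\<not> A \<and> R \<and> (\<exists>v. G v)")
    case True
    then obtain v where "\<not> A" "R" "G v"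
      by blast
    have "bernoulli_prob p {u} (\<lambda>z. A \<or> (R \<and> (\<exists>v. G v \<and> z u))) = bernoulli_prob p {u} (\<lambda>z. z u)"
      using True by (intro bernoulli_prob_cong) auto
    also have "\<dots> = bernoulli_prob p {e\<in>E. fst e = u} (\<lambda>y. y (u, v))"
      using fin \<open>G v\<close> by (simp add: bernoulli_prob_coordinate G_def)
    also have "\<dots> \<le> bernoulli_prob p {e\<in>E. fst e = u} (\<lambda>y. A \<or> (R \<and> (\<exists>v. G v \<and> y (u, v))))"
      using \<open>G v\<close> \<open>R\<close> assms by (intro bernoulli_prob_mono) auto
    finally show "bernoulli_prob p {u} (\<lambda>z. A \<or> (R \<and> (\<exists>v. G v \<and> z u)))
      \<le> bernoulli_prob p {e\<in>E. fst e = u} (\<lambda>y. A \<or> (R \<and> (\<exists>v. G v \<and> y (u, v))))" .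
  qed (use fin in \<open>auto simp: bernoulli_prob_const\<close>)
qed

text \<open>
  A path using both \<open>a \<rightarrow> b\<close> and \<open>b \<rightarrow> a\<close> can be shortcut, and a path using only \<open>a \<rightarrow> b\<close>
  together with one using only \<open>b \<rightarrow> a\<close> can be spliced into one using neither.
\<close>

lemma rtranclp_opposite_edges:
  fixes r :: "'v \<Rightarrow> 'v \<Rightarrow> bool" and a b s :: 'v and T :: "'v set"
  defines "F \<equiv> \<lambda>\<alpha> \<beta>. \<exists>t\<in>T. (\<lambda>x y. r x y \<or> (\<alpha> \<and> x = a \<and> y = b) \<or> (\<beta> \<and> x = b \<and> y = a))\<^sup>*\<^sup>* s t"
  shows "F \<alpha> \<beta> \<Longrightarrow> (\<alpha> \<Longrightarrow> \<alpha>') \<Longrightarrow> (\<beta> \<Longrightarrow> \<beta>') \<Longrightarrow> F \<alpha>' \<beta>'"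
    and "F True True \<Longrightarrow> F True False \<or> F False True"
    and "F True False \<Longrightarrow> F False True \<Longrightarrow> F False False"
proof -
  let ?r = "\<lambda>\<alpha> \<beta> x y. r x y \<or> (\<alpha> \<and> x = a \<and> y = b) \<or> (\<beta> \<and> x = b \<and> y = a)"
  have lift: "r\<^sup>*\<^sup>* c d \<Longrightarrow> (?r \<alpha> \<beta>)\<^sup>*\<^sup>* c d" for \<alpha> \<beta> c d
    by (erule rtranclp_mono[THEN predicate2D, rotated]) auto
  have ab: "(?r True False)\<^sup>*\<^sup>* c d \<longleftrightarrow> r\<^sup>*\<^sup>* c d \<or> (r\<^sup>*\<^sup>* c a \<and> r\<^sup>*\<^sup>* b d)" for c d
    using rtranclp_sup_out_edges[of r a "\<lambda>y. y = b" c d] by simp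
  have ba: "(?r False True)\<^sup>*\<^sup>* c d \<longleftrightarrow> r\<^sup>*\<^sup>* c d \<or> (r\<^sup>*\<^sup>* c b \<and> r\<^sup>*\<^sup>* a d)" for c d
    using rtranclp_sup_out_edges[of r b "\<lambda>y. y = a" c d] by simp
  have "?r True True = (\<lambda>x y. ?r False True x y \<or> (x = a \<and> y = b))"
    by (intro ext) auto
  then have both: "(?r True True)\<^sup>*\<^sup>* c d \<longleftrightarrow>
      (?r False True)\<^sup>*\<^sup>* c d \<or> ((?r False True)\<^sup>*\<^sup>* c a \<and> (?r False True)\<^sup>*\<^sup>* b d)" for c d
    using rtranclp_sup_out_edges[of "?r False True" a "\<lambda>y. y = b" c d] by simp
  show "F \<alpha> \<beta> \<Longrightarrow> (\<alpha> \<Longrightarrow> \<alpha>') \<Longrightarrow> (\<beta> \<Longrightarrow> \<beta>') \<Longrightarrow> F \<alpha>' \<beta>'"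
    unfolding F_def by (blast intro: rtranclp_mono[THEN predicate2D, rotated])
  show "F True False \<Longrightarrow> F False True \<Longrightarrow> F False False"
    unfolding F_def ab ba by (blast intro: lift rtranclp_trans)
  assume "F True True"
  then obtain t where "t \<in> T" "(?r True True)\<^sup>*\<^sup>* s t"
    unfolding F_def by blast
  then show "F True False \<or> F False True"
    unfolding F_def both ba ab by (blast intro: lift rtranclp_trans)
qed

lemma bernoulli_prob_reaches_unshare_edge_pair:
  assumes E: "(a, b) \<in> E" "(b, a) \<in> E" "a \<noteq> b"
  shows "bernoulli_prob p {{a, b}}
      (\<lambda>z. reaches E s T (\<lambda>e. if (\<lambda>(u, v). {u, v}) e = {a, b} then z {a, b} else x e))
    = bernoulli_prob p {e\<in>E. (\<lambda>(u, v). {u, v}) e = {a, b}}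
      (\<lambda>y. reaches E s T (\<lambda>e. if (\<lambda>(u, v). {u, v}) e = {a, b} then y e else x e))"
proof -
  define c where "c e \<longleftrightarrow> (\<lambda>(u, v). {u, v}) e \<noteq> {a, b} \<and> x e" for e
  define G where "G \<alpha> \<beta> \<longleftrightarrow> (\<exists>t\<in>T. (\<lambda>u v. open_edge E c u v \<or> (\<alpha> \<and> u = a \<and> v = b) \<or> (\<beta> \<and> u = b \<and> v = a))\<^sup>*\<^sup>* s t)"
    for \<alpha> \<beta>
  have reach_iff: "reaches E s T (\<lambda>e. if (\<lambda>(u, v). {u, v}) e = {a, b} then y e else x e)
      \<longleftrightarrow> G (y (a, b)) (y (b, a))" for y
  proof -
    have "open_edge E (\<lambda>e. if (\<lambda>(u, v). {u, v}) e = {a, b} then y e else x e) =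
        (\<lambda>u v. open_edge E c u v \<or> (y (a, b) \<and> u = a \<and> v = b) \<or> (y (b, a) \<and> u = b \<and> v = a))"
      using E by (auto simp: open_edge_def c_def fun_eq_iff doubleton_eq_iff)
    then show ?thesis
      by (simp add: reaches_def G_def)
  qed
  have mono: "G \<alpha> \<beta> \<Longrightarrow> G True True" "G False False \<Longrightarrow> G \<alpha> \<beta>" for \<alpha> \<beta>
    unfolding G_def by (erule rtranclp_opposite_edges(1); simp)+
  have one_way: "G True True \<Longrightarrow> G True False \<or> G False True"
    and not_both: "G True False \<Longrightarrow> G False True \<Longrightarrow> G False False"
    unfolding G_def by (fact rtranclp_opposite_edges(2,3))+
  have fibre: "{e\<in>E. (\<lambda>(u, v). {u, v}) e = {a, b}} = {(a, b), (b, a)}"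
    using E by (auto simp: doubleton_eq_iff)
  have "bernoulli_prob p {{a, b}}
      (\<lambda>z. reaches E s T (\<lambda>e. if (\<lambda>(u, v). {u, v}) e = {a, b} then z {a, b} else x e))
    = p * of_bool (G True True) + (1 - p) * of_bool (G False False)"
    unfolding reach_iff by (rule bernoulli_prob_singleton)
  also have "\<dots> = p * (p * of_bool (G True True) + (1 - p) * of_bool (G True False)) +
      (1 - p) * (p * of_bool (G False True) + (1 - p) * of_bool (G False False))"
    using mono[of True False] mono[of False True] one_way not_both
    by (cases "G True True"; cases "G True False"; cases "G False True"; cases "G False False")
      (simp_all add: algebra_simps)
  also have "\<dots> = bernoulli_prob p {e\<in>E. (\<lambda>(u, v). {u, v}) e = {a, b}}
      (\<lambda>y. reaches E s T (\<lambda>e. if (\<lambda>(u, v). {u, v}) e = {a, b} then y e else x e))"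
    unfolding fibre reach_iff using E by (intro bernoulli_prob_pair[symmetric]) auto
  finally show ?thesis .
qed

theorem bernoulli_prob_reaches_all_or_none_le:
  assumes "finite E" "0 \<le> p" "p \<le> 1"
  shows "bernoulli_prob p (fst ` E) (\<lambda>z. reaches E s T (\<lambda>e. z (fst e))) \<le> bernoulli_prob p E (reaches E s T)"
  by (rule bernoulli_prob_unshare_le[where Q="reaches E s T", OF assms reaches_local
        bernoulli_prob_reaches_unshare_out_edges[OF assms]])

theorem bernoulli_prob_reaches_undirected_eq:
  assumes "finite E" "0 \<le> p" "p \<le> 1"
    and sym: "\<And>u v. (u, v) \<in> E \<Longrightarrow> (v, u) \<in> E" and irrefl: "\<And>u v. (u, v) \<in> E \<Longrightarrow> u \<noteq> v"
  shows "bernoulli_prob p ((\<lambda>(u, v). {u, v}) ` E) (\<lambda>z. reaches E s T (\<lambda>e. z ((\<lambda>(u, v). {u, v}) e)))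
    = bernoulli_prob p E (reaches E s T)"
proof (rule bernoulli_prob_unshare_eq[where Q="reaches E s T", OF assms(1-3)])
  show "reaches E s T x = reaches E s T x'" if "\<And>e. e \<in> E \<Longrightarrow> x e = x' e" for x x'
    using that by (rule reaches_local)
next
  fix k x
  assume "k \<in> (\<lambda>(u, v). {u, v}) ` E"
  then obtain a b where ab: "(a, b) \<in> E" "k = {a, b}"
    by auto
  show "bernoulli_prob p {k} (\<lambda>z. reaches E s T (\<lambda>e. if (\<lambda>(u, v). {u, v}) e = k then z k else x e))
    = bernoulli_prob p {e\<in>E. (\<lambda>(u, v). {u, v}) e = k}
      (\<lambda>y. reaches E s T (\<lambda>e. if (\<lambda>(u, v). {u, v}) e = k then y e else x e))"
    unfolding ab(2) using ab(1) sym irrefl by (intro bernoulli_prob_reaches_unshare_edge_pair) auto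
qed

section \<open>Paths in the lattice\<close>

lemma norm1_zero [simp]: "norm1 0 = 0"
  unfolding norm1_def by simp

lemma norm1_minus_commute: "norm1 (u - v) = norm1 (v - u)"
  unfolding norm1_def by (intro sum.cong) auto

lemma norm1_triangle: "norm1 u \<le> norm1 v + norm1 (u - v)"
  unfolding norm1_def by (subst sum.distrib[symmetric]) (intro sum_mono, auto)

lemma abs_component_le_norm1: "\<bar>x $ i\<bar> \<le> norm1 x"
  unfolding norm1_def by (rule member_le_sum) auto

lemma adj_sym: "adj u v \<Longrightarrow> adj v u"
  unfolding adj_def by (simp add: norm1_minus_commute)

lemma adj_irrefl: "adj u v \<Longrightarrow> u \<noteq> v"
  unfolding adj_def by auto

lemma adj_norm1: "adj u v \<Longrightarrow> \<bar>norm1 u - norm1 v\<bar> \<le> 1"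
  unfolding adj_def using norm1_triangle[of u v] norm1_triangle[of v u] norm1_minus_commute[of u v]
  by auto

lemma finite_ball1: "finite (ball1 n :: (int ^ 'd) set)"
proof -
  have "ball1 n \<subseteq> vec_lambda ` PiE UNIV (\<lambda>_::'d. {- int n..int n})"
  proof
    fix x :: "int ^ 'd"
    assume "x \<in> ball1 n"
    then have "\<bar>x $ i\<bar> \<le> int n" for i
      using abs_component_le_norm1[of x i] by (auto simp: ball1_def)
    then have "(\<lambda>i. x $ i) \<in> PiE UNIV (\<lambda>_::'d. {- int n..int n})"
      by (auto simp: abs_le_iff minus_le_iff)
    then show "x \<in> vec_lambda ` PiE UNIV (\<lambda>_::'d. {- int n..int n})"
      by (rule rev_image_eqI) (simp add: vec_lambda_eta)
  qed
  then show ?thesis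
    by (rule finite_subset) (intro finite_imageI finite_PiE; simp)
qed

lemma mem_bdry_iff: "y \<in> bdry n \<longleftrightarrow> norm1 y = int n + 1"
  unfolding bdry_def ball1_def by auto

lemma exists_adj_norm1_Suc: "\<exists>z. adj y z \<and> norm1 z = norm1 (y :: int ^ 'd) + 1"
proof -
  fix i :: 'd
  define s :: int where "s = (if y $ i \<ge> 0 then 1 else -1)"
  define z where "z = y + (\<chi> j. if j = i then s else 0)"
  have "norm1 (y - z) = (\<Sum>j\<in>UNIV. if j = i then \<bar>s\<bar> else 0)"
    unfolding norm1_def z_def by (intro sum.cong) auto
  then have "adj y z"
    by (simp add: adj_def s_def)
  moreover have "norm1 z = (\<Sum>j\<in>UNIV. \<bar>y $ j\<bar> + (if j = i then 1 else 0))"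
    unfolding norm1_def z_def by (intro sum.cong) (auto simp: s_def)
  then have "norm1 z = norm1 y + 1"
    by (simp add: norm1_def sum.distrib)
  ultimately show ?thesis
    by blast
qed

lemma rtranclp_adj_norm1_between:
  assumes r: "\<And>u v. r u v \<Longrightarrow> adj u v" and path: "r\<^sup>*\<^sup>* x y"
  shows "norm1 x \<le> k \<Longrightarrow> k \<le> norm1 y \<Longrightarrow> \<exists>y'. r\<^sup>*\<^sup>* x y' \<and> norm1 y' = k"
  using path
proof (induction arbitrary: k rule: rtranclp_induct)
  case (step y z)
  show ?case
  proof (cases "k \<le> norm1 y")
    case True
    then show ?thesis
      using step by blast
  next
    case False
    then have "k = norm1 z"
      using adj_norm1[OF r[OF step.hyps(2)]] step.prems by auto
    then show ?thesis
      using rtranclp.rtrancl_into_rtrancl[OF step.hyps] by blast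
  qed
qed auto

lemma rtranclp_reach_bdry_Suc:
  assumes "\<And>u v. r u v \<Longrightarrow> adj u v" "\<exists>y\<in>bdry (Suc n). r\<^sup>*\<^sup>* 0 y"
  shows "\<exists>y\<in>bdry n. r\<^sup>*\<^sup>* 0 y"
proof -
  from assms(2) obtain y where "r\<^sup>*\<^sup>* 0 y" "norm1 y = int n + 2"
    by (auto simp: mem_bdry_iff)
  with rtranclp_adj_norm1_between[OF assms(1) this(1), of "int n + 1"]
  obtain y' where "r\<^sup>*\<^sup>* 0 y'" "norm1 y' = int n + 1"
    by auto
  then show ?thesis
    by (auto simp: mem_bdry_iff)
qed

lemma infinite_rtranclp_iff_reach_bdry:
  assumes r: "\<And>u v. r u v \<Longrightarrow> adj u v"
  shows "infinite {y :: int ^ 'd. r\<^sup>*\<^sup>* 0 y} \<longleftrightarrow> (\<forall>n. \<exists>y\<in>bdry n. r\<^sup>*\<^sup>* 0 y)"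
proof
  assume inf: "infinite {y :: int ^ 'd. r\<^sup>*\<^sup>* 0 y}"
  show "\<forall>n. \<exists>y\<in>bdry n. r\<^sup>*\<^sup>* 0 y"
  proof
    fix n
    have "\<not> {y. r\<^sup>*\<^sup>* 0 y} \<subseteq> ball1 n"
      using inf finite_subset finite_ball1 by blast
    then obtain y where "r\<^sup>*\<^sup>* 0 y" "int n < norm1 y"
      by (auto simp: ball1_def subset_iff not_le)
    from rtranclp_adj_norm1_between[OF r this(1), of "int n + 1"] this(2)
    obtain y' where "r\<^sup>*\<^sup>* 0 y'" "norm1 y' = int n + 1"
      by auto
    then show "\<exists>y\<in>bdry n. r\<^sup>*\<^sup>* 0 y"
      by (auto simp: mem_bdry_iff)
  qed
next
  assume reach: "\<forall>n. \<exists>y\<in>bdry n. r\<^sup>*\<^sup>* 0 y"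
  show "infinite {y :: int ^ 'd. r\<^sup>*\<^sup>* 0 y}"
  proof
    assume "finite {y :: int ^ 'd. r\<^sup>*\<^sup>* 0 y}"
    then have "bdd_above (norm1 ` {y. r\<^sup>*\<^sup>* 0 y})"
      by (intro bdd_above_finite finite_imageI)
    then obtain M where M: "\<And>y. r\<^sup>*\<^sup>* 0 y \<Longrightarrow> norm1 y \<le> M"
      by (auto simp: bdd_above_def)
    obtain y where y: "y \<in> bdry (nat M)" "r\<^sup>*\<^sup>* 0 y"
      using reach by blast
    have "norm1 y = int (nat M) + 1"
      using y(1) by (simp only: mem_bdry_iff)
    moreover have "norm1 y \<le> M"
      using M y(2) .
    ultimately show False
      by arith
  qed
qed

lemma reach_bdry_within_ball:
  assumes r: "\<And>u v. r u v \<Longrightarrow> adj u v"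
  shows "(\<exists>y\<in>bdry n. r\<^sup>*\<^sup>* 0 y) \<longleftrightarrow>
    (\<exists>y\<in>bdry n. (\<lambda>u v. r u v \<and> u \<in> ball1 (Suc n) \<and> v \<in> ball1 (Suc n))\<^sup>*\<^sup>* 0 y)"
    (is "?L \<longleftrightarrow> ?R")
proof
  let ?rB = "\<lambda>u v. r u v \<and> u \<in> ball1 (Suc n) \<and> v \<in> ball1 (Suc n)"
  have "r\<^sup>*\<^sup>* 0 y \<Longrightarrow> (norm1 y \<le> int n \<and> ?rB\<^sup>*\<^sup>* 0 y) \<or> ?R" for y
  proof (induction rule: rtranclp_induct)
    case (step y z)
    from step.IH show ?case
    proof
      assume y: "norm1 y \<le> int n \<and> ?rB\<^sup>*\<^sup>* 0 y"
      then have z: "norm1 z \<le> int n + 1"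
        using adj_norm1[OF r[OF step.hyps(2)]] by auto
      with y step.hyps(2) have "?rB\<^sup>*\<^sup>* 0 z"
        by (auto simp: ball1_def intro: rtranclp.rtrancl_into_rtrancl)
      with z show ?thesis
        by (cases "norm1 z \<le> int n") (auto simp: mem_bdry_iff)
    qed blast
  qed simp
  then show "?L \<Longrightarrow> ?R"
    by (auto simp: mem_bdry_iff)
  have "?rB\<^sup>*\<^sup>* a b \<Longrightarrow> r\<^sup>*\<^sup>* a b" for a b
    by (erule rtranclp_mono[THEN predicate2D, rotated]) auto
  then show "?R \<Longrightarrow> ?L"
    by blast
qed

section \<open>All-or-none versus site percolation\<close>

lemma site_conn_iff: "site_conn \<omega> x y \<longleftrightarrow> \<omega> x \<and> (\<lambda>u v. adj u v \<and> \<omega> u \<and> \<omega> v)\<^sup>*\<^sup>* x y"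
  unfolding site_conn_def by (auto elim: rtranclp.cases)

lemma site_conn_imp_aon_reach: "site_conn \<omega> x y \<Longrightarrow> aon_reach \<omega> x y"
  unfolding site_conn_def aon_reach_def
  by (auto elim: rtranclp_mono[THEN predicate2D, rotated])

lemma aon_reach_open_imp_site_conn: "aon_reach \<omega> x z \<Longrightarrow> \<omega> z \<Longrightarrow> site_conn \<omega> x z"
  unfolding aon_reach_def
proof (induction rule: rtranclp_induct)
  case (step y z)
  then show ?case
    by (auto simp: site_conn_def intro: rtranclp.rtrancl_into_rtrancl)
qed (simp add: site_conn_def)

lemma aon_reach_last_step:
  assumes "aon_reach \<omega> x z"
  shows "z = x \<or> (\<exists>w. site_conn \<omega> x w \<and> adj w z)"
  using assms unfolding aon_reach_def
proof (cases rule: rtranclp.cases)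
  case (rtrancl_into_rtrancl w)
  then have "site_conn \<omega> x w"
    by (intro aon_reach_open_imp_site_conn) (simp_all add: aon_reach_def)
  with rtrancl_into_rtrancl show ?thesis
    by auto
qed simp

lemma aon_reach_bdry_Suc_iff_site_conn_bdry:
  "(\<exists>y\<in>bdry (Suc n). aon_reach \<omega> 0 y) \<longleftrightarrow> (\<exists>y\<in>bdry n. site_conn \<omega> 0 (y :: int ^ 'd))"
proof
  assume "\<exists>y\<in>bdry (Suc n). aon_reach \<omega> 0 y"
  then obtain y :: "int ^ 'd" where "y \<in> bdry (Suc n)" and reach: "aon_reach \<omega> 0 y"
    by blast
  then have y: "norm1 y = int n + 2" "aon_reach \<omega> 0 y"
    by (simp_all add: mem_bdry_iff)
  then have "y \<noteq> 0"
    by auto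
  with aon_reach_last_step[OF y(2)] obtain w where w: "site_conn \<omega> 0 w" "adj w y"
    by auto
  then have "int n + 1 \<le> norm1 w"
    using adj_norm1[OF w(2)] y(1) by auto
  with w(1) obtain y' where "(\<lambda>u v. adj u v \<and> \<omega> u \<and> \<omega> v)\<^sup>*\<^sup>* 0 y'" "norm1 y' = int n + 1" "\<omega> 0"
    using rtranclp_adj_norm1_between[of "\<lambda>u v. adj u v \<and> \<omega> u \<and> \<omega> v" 0 w "int n + 1"]
    by (auto simp: site_conn_iff)
  then show "\<exists>y\<in>bdry n. site_conn \<omega> 0 y"
    by (auto simp: site_conn_iff mem_bdry_iff)
next
  assume "\<exists>y\<in>bdry n. site_conn \<omega> 0 (y :: int ^ 'd)"
  then obtain y :: "int ^ 'd" where y: "norm1 y = int n + 1" "site_conn \<omega> 0 y"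
    by (auto simp: mem_bdry_iff)
  obtain z where z: "adj y z" "norm1 z = norm1 y + 1"
    using exists_adj_norm1_Suc by blast
  have "aon_reach \<omega> 0 z"
    using site_conn_imp_aon_reach[OF y(2)] z(1) y(2)
    unfolding aon_reach_def site_conn_def by (auto intro: rtranclp.rtrancl_into_rtrancl)
  then show "\<exists>y\<in>bdry (Suc n). aon_reach \<omega> 0 y"
    using z(2) y(1) by (auto simp: mem_bdry_iff)
qed

lemma infinite_site_cluster_iff_aon:
  "infinite {y :: int ^ 'd. site_conn \<omega> 0 y} \<longleftrightarrow> infinite {y :: int ^ 'd. aon_reach \<omega> 0 y}"
proof -
  have site_adj: "\<And>u v. adj u v \<and> \<omega> u \<and> \<omega> v \<Longrightarrow> adj u v"
    and aon_adj: "\<And>u v. adj u v \<and> \<omega> u \<Longrightarrow> adj u v"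
    by auto
  have "infinite {y :: int ^ 'd. site_conn \<omega> 0 y} \<longleftrightarrow> (\<forall>n. \<exists>y\<in>bdry n. site_conn \<omega> 0 (y :: int ^ 'd))"
  proof (cases "\<omega> 0")
    case True
    then show ?thesis
      unfolding site_conn_iff by (simp add: infinite_rtranclp_iff_reach_bdry[OF site_adj])
  qed (simp add: site_conn_def)
  also have "\<dots> \<longleftrightarrow> (\<forall>n. \<exists>y\<in>bdry (Suc n). aon_reach \<omega> 0 (y :: int ^ 'd))"
    by (simp add: aon_reach_bdry_Suc_iff_site_conn_bdry)
  also have "\<dots> \<longleftrightarrow> (\<forall>n. \<exists>y\<in>bdry n. aon_reach \<omega> 0 (y :: int ^ 'd))"
  proof
    show "\<forall>n. \<exists>y\<in>bdry n. aon_reach \<omega> 0 y" if "\<forall>n. \<exists>y\<in>bdry (Suc n). aon_reach \<omega> 0 (y :: int ^ 'd)"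
    proof
      fix n
      from that have "\<exists>y\<in>bdry (Suc n). (\<lambda>u v. adj u v \<and> \<omega> u)\<^sup>*\<^sup>* 0 (y :: int ^ 'd)"
        unfolding aon_reach_def ..
      from rtranclp_reach_bdry_Suc[OF aon_adj this] show "\<exists>y\<in>bdry n. aon_reach \<omega> 0 y"
        unfolding aon_reach_def .
    qed
  qed blast
  also have "\<dots> \<longleftrightarrow> infinite {y :: int ^ 'd. aon_reach \<omega> 0 y}"
    unfolding aon_reach_def by (rule infinite_rtranclp_iff_reach_bdry[OF aon_adj, symmetric])
  finally show ?thesis .
qed

section \<open>Percolation events\<close>

definition ball_edges :: "nat \<Rightarrow> ((int ^ 'd) \<times> (int ^ 'd)) set" where
  "ball_edges n = {(u, v). adj u v \<and> u \<in> ball1 (Suc n) \<and> v \<in> ball1 (Suc n)}"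

lemma finite_ball_edges: "finite (ball_edges n)"
proof (rule finite_subset)
  show "ball_edges n \<subseteq> ball1 (Suc n) \<times> ball1 (Suc n)"
    unfolding ball_edges_def by auto
qed (intro finite_SigmaI finite_ball1)

text \<open>
  The coordinate of the product space read by a directed edge \<open>e\<close> is \<open>label e\<close>: its tail for
  all-or-none percolation, \<open>e\<close> itself for directed bonds, its end points for undirected bonds.
\<close>

lemma PiM_reach_bdry_event:
  fixes label :: "(int ^ 'd) \<times> (int ^ 'd) \<Rightarrow> 'i"
  assumes label: "\<And>u v. adj u v \<Longrightarrow> label (u, v) \<in> I" and p: "0 \<le> p" "p \<le> 1"
  defines "M \<equiv> PiM I (\<lambda>_. measure_pmf (bernoulli_pmf p))"
  shows "{\<omega>\<in>space M. \<exists>y\<in>bdry n. (\<lambda>u v. adj u v \<and> \<omega> (label (u, v)))\<^sup>*\<^sup>* 0 y} \<in> sets M"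
    and "measure M {\<omega>\<in>space M. \<exists>y\<in>bdry n. (\<lambda>u v. adj u v \<and> \<omega> (label (u, v)))\<^sup>*\<^sup>* 0 y}
      = bernoulli_prob p (label ` ball_edges n) (\<lambda>z. reaches (ball_edges n) 0 (bdry n) (\<lambda>e. z (label e)))"
proof -
  let ?J = "label ` ball_edges n"
  let ?Q = "\<lambda>z. reaches (ball_edges n) 0 (bdry n) (\<lambda>e. z (label e))"
  have event: "(\<exists>y\<in>bdry n. (\<lambda>u v. adj u v \<and> \<omega> (label (u, v)))\<^sup>*\<^sup>* 0 y) \<longleftrightarrow> ?Q (restrict \<omega> ?J)" for \<omega>
  proof -
    have "open_edge (ball_edges n) (\<lambda>e. restrict \<omega> ?J (label e)) =
        (\<lambda>u v. (adj u v \<and> \<omega> (label (u, v))) \<and> u \<in> ball1 (Suc n) \<and> v \<in> ball1 (Suc n))"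
      by (auto simp: open_edge_def ball_edges_def fun_eq_iff)
    then show ?thesis
      unfolding reaches_def using reach_bdry_within_ball[of "\<lambda>u v. adj u v \<and> \<omega> (label (u, v))" n]
      by simp
  qed
  have J: "finite ?J" "?J \<subseteq> I"
    using finite_ball_edges label by (auto simp: ball_edges_def)
  show "{\<omega>\<in>space M. \<exists>y\<in>bdry n. (\<lambda>u v. adj u v \<and> \<omega> (label (u, v)))\<^sup>*\<^sup>* 0 y} \<in> sets M"
    unfolding event M_def by (rule PiM_bernoulli_cylinder(1)[OF J p, where Q="?Q"])
  show "measure M {\<omega>\<in>space M. \<exists>y\<in>bdry n. (\<lambda>u v. adj u v \<and> \<omega> (label (u, v)))\<^sup>*\<^sup>* 0 y} = bernoulli_prob p ?J ?Q"
    unfolding event M_def by (rule PiM_bernoulli_cylinder(2)[OF J p, where Q="?Q"])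
qed

lemma tendsto_measure_reach_bdry:
  fixes R :: "'w \<Rightarrow> int ^ 'd \<Rightarrow> int ^ 'd \<Rightarrow> bool"
  assumes "prob_space M" and R: "\<And>\<omega> u v. R \<omega> u v \<Longrightarrow> adj u v"
    and events: "\<And>n. {\<omega>\<in>space M. \<exists>y\<in>bdry n. (R \<omega>)\<^sup>*\<^sup>* 0 y} \<in> sets M"
  shows "(\<lambda>n. measure M {\<omega>\<in>space M. \<exists>y\<in>bdry n. (R \<omega>)\<^sup>*\<^sup>* 0 y})
    \<longlonglongrightarrow> measure M {\<omega>\<in>space M. infinite {y. (R \<omega>)\<^sup>*\<^sup>* 0 y}}"
proof -
  interpret prob_space M
    by fact
  define A where "A n = {\<omega>\<in>space M. \<exists>y\<in>bdry n. (R \<omega>)\<^sup>*\<^sup>* 0 y}" for n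
  have "decseq A"
  proof (rule decseq_SucI, rule subsetI)
    fix n \<omega>
    assume "\<omega> \<in> A (Suc n)"
    then have "\<omega> \<in> space M" "\<exists>y\<in>bdry (Suc n). (R \<omega>)\<^sup>*\<^sup>* 0 y"
      by (simp_all add: A_def)
    then show "\<omega> \<in> A n"
      by (simp add: A_def rtranclp_reach_bdry_Suc[OF R])
  qed
  moreover have "range A \<subseteq> sets M"
    unfolding A_def using events by auto
  ultimately have "(\<lambda>n. measure M (A n)) \<longlonglongrightarrow> measure M (\<Inter>n. A n)"
    by (intro finite_Lim_measure_decseq)
  moreover have "(\<Inter>n. A n) = {\<omega>\<in>space M. infinite {y. (R \<omega>)\<^sup>*\<^sup>* 0 y}}"
    unfolding A_def by (auto simp: infinite_rtranclp_iff_reach_bdry[OF R])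
  ultimately show ?thesis
    unfolding A_def by simp
qed

lemma prob_space_PiM_bernoulli: "prob_space (PiM I (\<lambda>_. measure_pmf (bernoulli_pmf p)))"
  by (rule prob_space_PiM) (rule prob_space_measure_pmf)

context
  fixes p :: real
  assumes p: "0 \<le> p" "p \<le> 1"
begin

lemma aon_reach_bdry_event:
  "{\<omega>\<in>space (vertex_ps p). \<exists>y\<in>bdry n. aon_reach \<omega> 0 (y :: int ^ 'd)} \<in> sets (vertex_ps p)"
  "measure (vertex_ps p) {\<omega>\<in>space (vertex_ps p). \<exists>y\<in>bdry n. aon_reach \<omega> 0 (y :: int ^ 'd)}
    = bernoulli_prob p (fst ` (ball_edges n :: ((int ^ 'd) \<times> (int ^ 'd)) set))
        (\<lambda>z. reaches (ball_edges n) 0 (bdry n) (\<lambda>e. z (fst e)))"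
  using PiM_reach_bdry_event[of "fst :: (int ^ 'd) \<times> (int ^ 'd) \<Rightarrow> int ^ 'd" UNIV p n, OF _ p]
  unfolding vertex_ps_def aon_reach_def by simp_all

lemma dir_reach_bdry_event:
  "{\<omega>\<in>space (dir_bond_ps p). \<exists>y\<in>bdry n. dir_reach \<omega> 0 (y :: int ^ 'd)} \<in> sets (dir_bond_ps p)"
  "measure (dir_bond_ps p) {\<omega>\<in>space (dir_bond_ps p). \<exists>y\<in>bdry n. dir_reach \<omega> 0 (y :: int ^ 'd)}
    = bernoulli_prob p (ball_edges n :: ((int ^ 'd) \<times> (int ^ 'd)) set) (reaches (ball_edges n) 0 (bdry n))"
  using PiM_reach_bdry_event[of "\<lambda>e :: (int ^ 'd) \<times> (int ^ 'd). e" "{(u, v). adj u v}" p n, OF _ p]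
  unfolding dir_bond_ps_def dir_reach_def by simp_all

lemma bond_conn_bdry_event:
  "{\<omega>\<in>space (undir_bond_ps p). \<exists>y\<in>bdry n. bond_conn \<omega> 0 (y :: int ^ 'd)} \<in> sets (undir_bond_ps p)"
  "measure (undir_bond_ps p) {\<omega>\<in>space (undir_bond_ps p). \<exists>y\<in>bdry n. bond_conn \<omega> 0 (y :: int ^ 'd)}
    = bernoulli_prob p ((\<lambda>(u, v). {u, v}) ` (ball_edges n :: ((int ^ 'd) \<times> (int ^ 'd)) set))
        (\<lambda>z. reaches (ball_edges n) 0 (bdry n) (\<lambda>e. z ((\<lambda>(u, v). {u, v}) e)))"
  using PiM_reach_bdry_event[of "\<lambda>(u :: int ^ 'd, v). {u, v}" "{{u, v} | u v. adj u v}" p n, OF _ p]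
  unfolding undir_bond_ps_def bond_conn_def by auto

lemma aon_reach_bdry_prob_le_dir_reach:
  "measure (vertex_ps p) {\<omega>\<in>space (vertex_ps p). \<exists>y\<in>bdry n. aon_reach \<omega> 0 (y :: int ^ 'd)}
    \<le> measure (dir_bond_ps p) {\<omega>\<in>space (dir_bond_ps p). \<exists>y\<in>bdry n. dir_reach \<omega> 0 (y :: int ^ 'd)}"
  unfolding aon_reach_bdry_event dir_reach_bdry_event
  by (rule bernoulli_prob_reaches_all_or_none_le[OF finite_ball_edges p])

lemma bond_conn_bdry_prob_eq_dir_reach:
  "measure (undir_bond_ps p) {\<omega>\<in>space (undir_bond_ps p). \<exists>y\<in>bdry n. bond_conn \<omega> 0 (y :: int ^ 'd)}
    = measure (dir_bond_ps p) {\<omega>\<in>space (dir_bond_ps p). \<exists>y\<in>bdry n. dir_reach \<omega> 0 (y :: int ^ 'd)}"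
  unfolding bond_conn_bdry_event dir_reach_bdry_event
  by (rule bernoulli_prob_reaches_undirected_eq[OF finite_ball_edges p])
    (auto simp: ball_edges_def dest: adj_sym adj_irrefl)

lemma tendsto_aon_reach_bdry_prob:
  "(\<lambda>n. measure (vertex_ps p) {\<omega>\<in>space (vertex_ps p). \<exists>y\<in>bdry n. aon_reach \<omega> 0 (y :: int ^ 'd)})
    \<longlonglongrightarrow> measure (vertex_ps p) {\<omega>\<in>space (vertex_ps p). infinite {y :: int ^ 'd. aon_reach \<omega> 0 y}}"
  unfolding aon_reach_def
proof (rule tendsto_measure_reach_bdry)
  show "prob_space (vertex_ps p)"
    unfolding vertex_ps_def by (rule prob_space_PiM_bernoulli)
qed (use aon_reach_bdry_event(1) in \<open>auto simp: aon_reach_def\<close>)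

lemma tendsto_dir_reach_bdry_prob:
  "(\<lambda>n. measure (dir_bond_ps p) {\<omega>\<in>space (dir_bond_ps p). \<exists>y\<in>bdry n. dir_reach \<omega> 0 (y :: int ^ 'd)})
    \<longlonglongrightarrow> measure (dir_bond_ps p) {\<omega>\<in>space (dir_bond_ps p). infinite {y :: int ^ 'd. dir_reach \<omega> 0 y}}"
  unfolding dir_reach_def
proof (rule tendsto_measure_reach_bdry)
  show "prob_space (dir_bond_ps p)"
    unfolding dir_bond_ps_def by (rule prob_space_PiM_bernoulli)
qed (use dir_reach_bdry_event(1) in \<open>auto simp: dir_reach_def\<close>)

lemma tendsto_bond_conn_bdry_prob:
  "(\<lambda>n. measure (undir_bond_ps p) {\<omega>\<in>space (undir_bond_ps p). \<exists>y\<in>bdry n. bond_conn \<omega> 0 (y :: int ^ 'd)})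
    \<longlonglongrightarrow> measure (undir_bond_ps p) {\<omega>\<in>space (undir_bond_ps p). infinite {y :: int ^ 'd. bond_conn \<omega> 0 y}}"
  unfolding bond_conn_def
proof (rule tendsto_measure_reach_bdry)
  show "prob_space (undir_bond_ps p)"
    unfolding undir_bond_ps_def by (rule prob_space_PiM_bernoulli)
qed (use bond_conn_bdry_event(1) in \<open>auto simp: bond_conn_def\<close>)

end

theorem mainTheorem8:
  fixes p :: real and n :: nat
  assumes "0 < p" "p < 1"
  shows "(measure (vertex_ps p)
           {\<omega> \<in> space (vertex_ps p). \<exists>y \<in> (bdry (Suc n) :: (int ^ 'd) set). aon_reach \<omega> 0 y}
       = measure (vertex_ps p)
           {\<omega> \<in> space (vertex_ps p). \<exists>y \<in> (bdry n :: (int ^ 'd) set). site_conn \<omega> 0 y})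
     \<and> (measure (vertex_ps p)
           {\<omega> \<in> space (vertex_ps p). infinite {y :: int ^ 'd. site_conn \<omega> 0 y}}
       = measure (vertex_ps p)
           {\<omega> \<in> space (vertex_ps p). infinite {y :: int ^ 'd. aon_reach \<omega> 0 y}})
     \<and> (measure (vertex_ps p)
           {\<omega> \<in> space (vertex_ps p). infinite {y :: int ^ 'd. aon_reach \<omega> 0 y}}
       \<le> measure (dir_bond_ps p)
           {\<omega> \<in> space (dir_bond_ps p). infinite {y :: int ^ 'd. dir_reach \<omega> 0 y}})
     \<and> (measure (dir_bond_ps p)
           {\<omega> \<in> space (dir_bond_ps p). infinite {y :: int ^ 'd. dir_reach \<omega> 0 y}}
       = measure (undir_bond_ps p)
           {\<omega> \<in> space (undir_bond_ps p). infinite {y :: int ^ 'd. bond_conn \<omega> 0 y}})"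
proof -
  from assms have p: "0 \<le> p" "p \<le> 1"
    by auto
  show ?thesis
  proof (intro conjI, goal_cases)
    case 1
    show ?case
      by (simp add: aon_reach_bdry_Suc_iff_site_conn_bdry)
  next
    case 2
    show ?case
      by (simp add: infinite_site_cluster_iff_aon)
  next
    case 3
    show ?case
      using tendsto_aon_reach_bdry_prob[OF p] tendsto_dir_reach_bdry_prob[OF p]
      by (rule LIMSEQ_le) (use aon_reach_bdry_prob_le_dir_reach[OF p] in blast)
  next
    case 4
    show ?case
      using tendsto_dir_reach_bdry_prob[OF p] tendsto_bond_conn_bdry_prob[OF p]
      unfolding bond_conn_bdry_prob_eq_dir_reach[OF p] by (rule LIMSEQ_unique)
  qed
qed

end
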